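(* Let $(V,[-,-,-],\langle-,-\rangle)$ be a real metric 3-Leibniz algebra, let $T(u,v)=[u,v,-]\in\mathfrak{gl}(V)$, and let $\mathfrak{g}$ be the linear span of all $T(u,v)$. The bilinear form on $\mathfrak{g}$ defined by extending $(T(u,v),T(w,s))=\langle T(u,v)w,s\rangle$ bilinearly to all of $\mathfrak{g}$ is symmetric, nondegenerate and ad-invariant.
   Context: All vector spaces are finite-dimensional and real. A real metric 3-Leibniz algebra is a vector space $V$ with nondegenerate symmetric bilinear $\langle-,-\rangle$ and trilinear $[-,-,-]:V^3\to V$ satisfying: fundamental identity $[x,y,[z,s,t]]=[[x,y,z],s,t]+[z,[x,y,s],t]+[z,s,[x,y,t]]$; unitarity $\langle[x,y,z],s\rangle+\langle z,[x,y,s]\rangle=0$; symmetry $\langle[x,y,z],s\rangle=\langle[z,s,x],y\rangle$. The span $\mathfrak{g}$ is a Lie subalgebra of $\mathfrak{gl}(V)$ under the commutator, and ad-invariance refers to this Lie bracket. *)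

theory Defs
  imports "HOL-Analysis.Analysis"
begin

text \<open>Real metric 3-Leibniz algebra on a finite-dimensional real vector space 'v
  (euclidean_space is used only to get finite dimensionality; its own inner product
  plays no role).\<close>

definition metric_3leibniz :: "('v::euclidean_space \<Rightarrow> 'v \<Rightarrow> real) \<Rightarrow> ('v \<Rightarrow> 'v \<Rightarrow> 'v \<Rightarrow> 'v) \<Rightarrow> bool" where
  "metric_3leibniz B br \<longleftrightarrow>
     bilinear B \<and> (\<forall>x y. B x y = B y x) \<and> (\<forall>x. (\<forall>y. B x y = 0) \<longrightarrow> x = 0) \<and>
     (\<forall>y z. linear (\<lambda>x. br x y z)) \<and> (\<forall>x z. linear (\<lambda>y. br x y z)) \<and> (\<forall>x y. linear (br x y)) \<and>
     (\<forall>x y z s t. br x y (br z s t) = br (br x y z) s t + br z (br x y s) t + br z s (br x y t)) \<and>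
     (\<forall>x y z s. B (br x y z) s + B z (br x y s) = 0) \<and>
     (\<forall>x y z s. B (br x y z) s = B (br z s x) y)"

definition T_span :: "('v::euclidean_space \<Rightarrow> 'v \<Rightarrow> 'v \<Rightarrow> 'v) \<Rightarrow> ('v \<Rightarrow> 'v) set" where
  "T_span br = {(\<lambda>x. \<Sum>i<(n::nat). c i *\<^sub>R br (a i) (b i) x) | n c a b. True}"

definition bilinear_on :: "('v::real_vector \<Rightarrow> 'v) set \<Rightarrow> (('v \<Rightarrow> 'v) \<Rightarrow> ('v \<Rightarrow> 'v) \<Rightarrow> real) \<Rightarrow> bool" where
  "bilinear_on S K \<longleftrightarrow> (\<forall>X\<in>S. \<forall>Y\<in>S. \<forall>Z\<in>S. \<forall>c::real.
      K (\<lambda>x. c *\<^sub>R X x + Y x) Z = c * K X Z + K Y Z \<and>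
      K Z (\<lambda>x. c *\<^sub>R X x + Y x) = c * K Z X + K Z Y)"

definition comm_bracket :: "('v::real_vector \<Rightarrow> 'v) \<Rightarrow> ('v \<Rightarrow> 'v) \<Rightarrow> ('v \<Rightarrow> 'v)" where
  "comm_bracket X Y = (\<lambda>x. X (Y x) - Y (X x))"

end

theory Submission
  imports Defs
begin

text \<open>Any bilinear K on the span with the prescribed values on generators satisfies
  K(X, T(w,s)) = <X w, s> for all X in the span, so
  symmetry and nondegeneracy of K come from the symmetry axiom and nondegeneracy of <-,->.
  For invariance, D = T(a,b) acts as a derivation of the bracket (fundamental identity) that is
  skew for <-,-> (unitarity); this gives invariance on generators, and bilinearity spreads it
  to the whole span. For existence, put K(X,Y) = sum_j d_j <X w_j, s_j> for
  Y = sum_j d_j T(w_j,s_j); by the symmetry axiom this also equals sum_i c_i <Y a_i, b_i> for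
  X = sum_i c_i T(a_i,b_i), so it does not depend on the chosen representations.\<close>

lemma T_span_zero: "(\<lambda>x. 0) \<in> T_span br"
  unfolding T_span_def by (rule CollectI, rule exI[of _ "0::nat"]) simp

lemma T_span_step:
  assumes "X \<in> T_span br"
  shows "(\<lambda>x. c *\<^sub>R br u v x + X x) \<in> T_span br"
proof -
  from assms obtain n d a b where X: "X = (\<lambda>x. \<Sum>i<(n::nat). d i *\<^sub>R br (a i) (b i) x)"
    unfolding T_span_def by blast
  have "(\<lambda>x. c *\<^sub>R br u v x + X x) =
      (\<lambda>x. \<Sum>i<Suc n. (d(n:=c)) i *\<^sub>R br ((a(n:=u)) i) ((b(n:=v)) i) x)"
    unfolding X by (auto intro!: ext sum.cong simp: add.commute)
  then show ?thesis unfolding T_span_def by blast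
qed

lemma T_span_induct [consumes 1, case_names zero step]:
  assumes "X \<in> T_span br" and "P (\<lambda>x. 0)"
    and "\<And>c u v Y. Y \<in> T_span br \<Longrightarrow> P Y \<Longrightarrow> P (\<lambda>x. c *\<^sub>R br u v x + Y x)"
  shows "P X"
proof -
  from assms(1) obtain n d a b where X: "X = (\<lambda>x. \<Sum>i<(n::nat). d i *\<^sub>R br (a i) (b i) x)"
    unfolding T_span_def by blast
  have "(\<lambda>x. \<Sum>i<n. d i *\<^sub>R br (a i) (b i) x) \<in> T_span br \<and> P (\<lambda>x. \<Sum>i<n. d i *\<^sub>R br (a i) (b i) x)"
  proof (induction n)
    case 0
    then show ?case using assms(2) T_span_zero by simp
  next
    case (Suc n)
    have split: "(\<lambda>x. \<Sum>i<Suc n. d i *\<^sub>R br (a i) (b i) x) =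
        (\<lambda>x. d n *\<^sub>R br (a n) (b n) x + (\<Sum>i<n. d i *\<^sub>R br (a i) (b i) x))"
      by (simp add: add.commute)
    show ?case unfolding split using Suc assms(3) T_span_step by blast
  qed
  then show ?thesis using X by simp
qed

lemma T_span_generator: "br u v \<in> T_span br"
  using T_span_step[OF T_span_zero, of 1 br u v] by simp

lemma T_span_add:
  assumes "X \<in> T_span br" "Y \<in> T_span br"
  shows "(\<lambda>x. X x + Y x) \<in> T_span br"
  using assms(1)
proof (induction rule: T_span_induct)
  case zero
  then show ?case using assms(2) by simp
next
  case (step c u v Z)
  then show ?case using T_span_step[of "\<lambda>x. Z x + Y x" br c u v] by (simp add: add.assoc)
qed

lemma T_span_scaleR:
  assumes "X \<in> T_span br"
  shows "(\<lambda>x. d *\<^sub>R X x) \<in> T_span br"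
  using assms
proof (induction rule: T_span_induct)
  case zero
  then show ?case using T_span_zero by simp
next
  case (step c u v Z)
  then show ?case using T_span_step[of "\<lambda>x. d *\<^sub>R Z x" br "d * c" u v] by (simp add: scaleR_add_right)
qed

lemma comm_bracket_zero_left: "linear Y \<Longrightarrow> comm_bracket (\<lambda>x. 0) Y = (\<lambda>x. 0)"
  unfolding comm_bracket_def by (simp add: linear_0)

lemma comm_bracket_zero_right: "linear X \<Longrightarrow> comm_bracket X (\<lambda>x. 0) = (\<lambda>x. 0)"
  unfolding comm_bracket_def by (simp add: linear_0)

lemma comm_bracket_linear_left:
  "linear Y \<Longrightarrow> comm_bracket (\<lambda>x. c *\<^sub>R P x + Q x) Y
     = (\<lambda>x. c *\<^sub>R comm_bracket P Y x + comm_bracket Q Y x)"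
  unfolding comm_bracket_def by (simp add: fun_eq_iff linear_add linear_cmul algebra_simps)

lemma comm_bracket_linear_right:
  "linear X \<Longrightarrow> comm_bracket X (\<lambda>x. c *\<^sub>R P x + Q x)
     = (\<lambda>x. c *\<^sub>R comm_bracket X P x + comm_bracket X Q x)"
  unfolding comm_bracket_def by (simp add: fun_eq_iff linear_add linear_cmul algebra_simps)

locale metric_3leibniz_algebra =
  fixes B :: "'v::euclidean_space \<Rightarrow> 'v \<Rightarrow> real"
    and br :: "'v \<Rightarrow> 'v \<Rightarrow> 'v \<Rightarrow> 'v"
  assumes metric_3leibniz: "metric_3leibniz B br"
begin

lemma bilinear_B: "bilinear B"
  using metric_3leibniz unfolding metric_3leibniz_def by metis

lemma B_sym: "B x y = B y x"
  using metric_3leibniz unfolding metric_3leibniz_def by metis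

lemma B_nondegenerate: "(\<And>y. B x y = 0) \<Longrightarrow> x = 0"
  using metric_3leibniz unfolding metric_3leibniz_def by metis

lemma linear_bracket: "linear (br x y)"
  using metric_3leibniz unfolding metric_3leibniz_def by metis

lemma fundamental_identity:
  "br x y (br z s t) = br (br x y z) s t + br z (br x y s) t + br z s (br x y t)"
  using metric_3leibniz unfolding metric_3leibniz_def by metis

lemma unitarity: "B (br x y z) s + B z (br x y s) = 0"
  using metric_3leibniz unfolding metric_3leibniz_def by metis

lemma B_bracket_swap: "B (br x y z) s = B (br z s x) y"
  using metric_3leibniz unfolding metric_3leibniz_def by metis

lemma B_scaleR_left: "B (c *\<^sub>R x) y = c * B x y"
  using bilinear_lmul[OF bilinear_B] by simp

lemma B_add_left: "B (x + y) z = B x z + B y z"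
  using bilinear_ladd[OF bilinear_B] by simp

lemma B_diff_left: "B (x - y) z = B x z - B y z"
  using bilinear_lsub[OF bilinear_B] by simp

lemma B_zero_left: "B 0 y = 0"
  using bilinear_lzero[OF bilinear_B] by simp

lemma B_sum_left: "B (\<Sum>j\<in>S. f j) y = (\<Sum>j\<in>S. B (f j) y)"
  using real_vector.linear_sum[of "\<lambda>x. B x y"] bilinear_B unfolding bilinear_def by blast

lemma linear_T_span: "X \<in> T_span br \<Longrightarrow> linear X"
proof (induction rule: T_span_induct)
  case zero
  then show ?case by (simp add: linear_zero)
next
  case (step c u v Y)
  then show ?case
    by (intro real_vector.module_hom_add real_vector.module_hom_scale linear_bracket)
qed

lemma comm_bracket_generators:
  "comm_bracket (br u v) (br w s) = (\<lambda>x. br (br u v w) s x + br w (br u v s) x)"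
  unfolding comm_bracket_def
  by (simp add: fun_eq_iff fundamental_identity[of u v w s])

lemma T_span_comm_bracket_generator:
  "Y \<in> T_span br \<Longrightarrow> comm_bracket (br u v) Y \<in> T_span br"
proof (induction rule: T_span_induct)
  case zero
  then show ?case using comm_bracket_zero_right[OF linear_bracket] T_span_zero by simp
next
  case (step c w s Y)
  have "(\<lambda>x. br (br u v w) s x + br w (br u v s) x) \<in> T_span br"
    by (rule T_span_add[OF T_span_generator T_span_generator])
  from T_span_add[OF T_span_scaleR[OF this, of c] step.IH] show ?case
    by (simp add: comm_bracket_linear_right[OF linear_bracket] comm_bracket_generators)
qed

lemma T_span_comm_bracket:
  "X \<in> T_span br \<Longrightarrow> Y \<in> T_span br \<Longrightarrow> comm_bracket X Y \<in> T_span br"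
proof (induction rule: T_span_induct)
  case zero
  then show ?case using comm_bracket_zero_left[OF linear_T_span] T_span_zero by simp
next
  case (step c u v Z)
  from T_span_add[OF T_span_scaleR[OF T_span_comm_bracket_generator[OF step.prems]] step.IH[OF step.prems]]
  show ?case
    by (simp add: comm_bracket_linear_left[OF linear_T_span[OF step.prems]])
qed

lemma comm_bracket_generator_invariance:
  "B (comm_bracket (br a b) (br y z) w) s + B (comm_bracket (br a b) (br w s) y) z = 0"
proof -
  have "B (comm_bracket (br a b) (br y z) w) s = B (br w s (br a b y)) z + B (br w s y) (br a b z)"
    using B_bracket_swap[of "br a b y" z w s] B_bracket_swap[of y "br a b z" w s]
    by (simp add: comm_bracket_generators B_add_left)
  also have "B (br w s y) (br a b z) = - B (br a b (br w s y)) z"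
    using unitarity[of a b z "br w s y"] B_sym[of "br w s y"] B_sym[of z] by simp
  finally show ?thesis
    unfolding comm_bracket_def by (simp add: B_diff_left)
qed

lemma T_span_generator_invariance:
  "X \<in> T_span br \<Longrightarrow> B (comm_bracket X (br y z) w) s + B (comm_bracket X (br w s) y) z = 0"
proof (induction rule: T_span_induct)
  case zero
  then show ?case using comm_bracket_zero_left[OF linear_bracket] B_zero_left by simp
next
  case (step c u v Y)
  have "B (comm_bracket (\<lambda>x. c *\<^sub>R br u v x + Y x) (br y z) w) s
      + B (comm_bracket (\<lambda>x. c *\<^sub>R br u v x + Y x) (br w s) y) z
    = c * (B (comm_bracket (br u v) (br y z) w) s + B (comm_bracket (br u v) (br w s) y) z)
      + (B (comm_bracket Y (br y z) w) s + B (comm_bracket Y (br w s) y) z)"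
    unfolding comm_bracket_linear_left[OF linear_bracket]
    by (simp add: B_add_left B_scaleR_left algebra_simps)
  then show ?case
    using comm_bracket_generator_invariance step.IH by simp
qed

lemma representation_pairing_swap:
  assumes X: "X = (\<lambda>x. \<Sum>i<(n::nat). c i *\<^sub>R br (a i) (b i) x)"
    and Y: "Y = (\<lambda>x. \<Sum>j<(m::nat). d j *\<^sub>R br (w j) (s j) x)"
  shows "(\<Sum>j<m. d j * B (X (w j)) (s j)) = (\<Sum>i<n. c i * B (Y (a i)) (b i))"
proof -
  have "(\<Sum>j<m. d j * B (X (w j)) (s j)) = (\<Sum>j<m. \<Sum>i<n. c i * (d j * B (br (a i) (b i) (w j)) (s j)))"
    unfolding X by (simp add: B_sum_left B_scaleR_left sum_distrib_left algebra_simps)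
  also have "\<dots> = (\<Sum>i<n. \<Sum>j<m. c i * (d j * B (br (w j) (s j) (a i)) (b i)))"
    by (subst sum.swap) (simp add: B_bracket_swap)
  also have "\<dots> = (\<Sum>i<n. c i * B (Y (a i)) (b i))"
    unfolding Y by (simp add: B_sum_left B_scaleR_left sum_distrib_left)
  finally show ?thesis .
qed

definition T_form :: "('v \<Rightarrow> 'v) \<Rightarrow> ('v \<Rightarrow> 'v) \<Rightarrow> real" where
  "T_form X Y = (SOME k. \<exists>m d w s. Y = (\<lambda>x. \<Sum>j<(m::nat). d j *\<^sub>R br (w j) (s j) x)
      \<and> k = (\<Sum>j<m. d j * B (X (w j)) (s j)))"

lemma T_form_right_representation:
  assumes X: "X \<in> T_span br"
    and Y: "Y = (\<lambda>x. \<Sum>j<(m::nat). d j *\<^sub>R br (w j) (s j) x)"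
  shows "T_form X Y = (\<Sum>j<m. d j * B (X (w j)) (s j))"
proof -
  have "\<exists>k m d w s. Y = (\<lambda>x. \<Sum>j<(m::nat). d j *\<^sub>R br (w j) (s j) x)
      \<and> k = (\<Sum>j<m. d j * B (X (w j)) (s j))"
    using Y by blast
  from someI_ex[OF this] obtain m' d' w' s' where
    Y': "Y = (\<lambda>x. \<Sum>j<(m'::nat). d' j *\<^sub>R br (w' j) (s' j) x)"
    and T_form: "T_form X Y = (\<Sum>j<m'. d' j * B (X (w' j)) (s' j))"
    unfolding T_form_def by blast
  obtain n c a b where "X = (\<lambda>x. \<Sum>i<(n::nat). c i *\<^sub>R br (a i) (b i) x)"
    using X unfolding T_span_def by blast
  then show ?thesis
    unfolding T_form using representation_pairing_swap[OF _ Y] representation_pairing_swap[OF _ Y']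
    by simp
qed

lemma T_form_left_representation:
  assumes X: "X = (\<lambda>x. \<Sum>i<(n::nat). c i *\<^sub>R br (a i) (b i) x)"
    and Y: "Y \<in> T_span br"
  shows "T_form X Y = (\<Sum>i<n. c i * B (Y (a i)) (b i))"
proof -
  obtain m d w s where Y': "Y = (\<lambda>x. \<Sum>j<(m::nat). d j *\<^sub>R br (w j) (s j) x)"
    using Y unfolding T_span_def by blast
  have "X \<in> T_span br"
    using X unfolding T_span_def by blast
  from T_form_right_representation[OF this Y'] show ?thesis
    using representation_pairing_swap[OF X Y'] by simp
qed

lemma bilinear_on_T_form: "bilinear_on (T_span br) T_form"
  unfolding bilinear_on_def
proof (intro ballI allI conjI)
  fix X Y Z and e :: real
  assume XYZ: "X \<in> T_span br" "Y \<in> T_span br" "Z \<in> T_span br"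
  have S: "(\<lambda>x. e *\<^sub>R X x + Y x) \<in> T_span br"
    by (rule T_span_add[OF T_span_scaleR[OF XYZ(1)] XYZ(2)])
  obtain m d w s where Z: "Z = (\<lambda>x. \<Sum>j<(m::nat). d j *\<^sub>R br (w j) (s j) x)"
    using XYZ(3) unfolding T_span_def by blast
  show "T_form (\<lambda>x. e *\<^sub>R X x + Y x) Z = e * T_form X Z + T_form Y Z"
    unfolding T_form_right_representation[OF S Z] T_form_right_representation[OF XYZ(1) Z]
      T_form_right_representation[OF XYZ(2) Z]
    by (simp add: B_add_left B_scaleR_left sum.distrib sum_distrib_left algebra_simps)
  show "T_form Z (\<lambda>x. e *\<^sub>R X x + Y x) = e * T_form Z X + T_form Z Y"
    unfolding T_form_left_representation[OF Z S] T_form_left_representation[OF Z XYZ(1)]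
      T_form_left_representation[OF Z XYZ(2)]
    by (simp add: B_add_left B_scaleR_left sum.distrib sum_distrib_left algebra_simps)
qed

lemma T_form_generators: "T_form (br u v) (br w s) = B (br u v w) s"
  using T_form_right_representation[OF T_span_generator,
      where Y = "br w s" and m = 1 and d = "\<lambda>_. 1" and w = "\<lambda>_. w" and s = "\<lambda>_. s"]
  by simp

end

locale generator_pairing = metric_3leibniz_algebra +
  fixes K
  assumes bilinear_on_K: "bilinear_on (T_span br) K"
    and K_generators: "K (br u v) (br w s) = B (br u v w) s"
begin

lemma K_linear_left:
  "X \<in> T_span br \<Longrightarrow> Y \<in> T_span br \<Longrightarrow> Z \<in> T_span br \<Longrightarrow>
    K (\<lambda>x. c *\<^sub>R X x + Y x) Z = c * K X Z + K Y Z"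
  using bilinear_on_K unfolding bilinear_on_def by blast

lemma K_linear_right:
  "X \<in> T_span br \<Longrightarrow> Y \<in> T_span br \<Longrightarrow> Z \<in> T_span br \<Longrightarrow>
    K Z (\<lambda>x. c *\<^sub>R X x + Y x) = c * K Z X + K Z Y"
  using bilinear_on_K unfolding bilinear_on_def by blast

lemma K_zero_left: "Z \<in> T_span br \<Longrightarrow> K (\<lambda>x. 0) Z = 0"
  using K_linear_left[OF T_span_zero T_span_zero, of Z 1] by simp

lemma K_zero_right: "Z \<in> T_span br \<Longrightarrow> K Z (\<lambda>x. 0) = 0"
  using K_linear_right[OF T_span_zero T_span_zero, of Z 1] by simp

lemma K_generator_right: "X \<in> T_span br \<Longrightarrow> K X (br w s) = B (X w) s"
proof (induction rule: T_span_induct)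
  case zero
  then show ?case using K_zero_left[OF T_span_generator] B_zero_left by simp
next
  case (step c u v Y)
  then show ?case
    using K_linear_left[OF T_span_generator step.hyps T_span_generator] K_generators
    by (simp add: B_add_left B_scaleR_left)
qed

lemma K_generator_left: "X \<in> T_span br \<Longrightarrow> K (br w s) X = K X (br w s)"
proof (induction rule: T_span_induct)
  case zero
  then show ?case using K_zero_left[OF T_span_generator] K_zero_right[OF T_span_generator] by simp
next
  case (step c u v Y)
  then show ?case
    using K_linear_left[OF T_span_generator step.hyps T_span_generator]
      K_linear_right[OF T_span_generator step.hyps T_span_generator]
      K_generators B_bracket_swap[of w s u v]
    by simp
qed

lemma K_sym: "X \<in> T_span br \<Longrightarrow> Y \<in> T_span br \<Longrightarrow> K X Y = K Y X"
proof (induction rule: T_span_induct)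
  case zero
  then show ?case using K_zero_left K_zero_right by simp
next
  case (step c u v Z)
  then show ?case
    using K_linear_left[OF T_span_generator step.hyps step.prems]
      K_linear_right[OF T_span_generator step.hyps step.prems] K_generator_left[OF step.prems]
    by simp
qed

lemma K_nondegenerate:
  assumes X: "X \<in> T_span br" and orth: "\<forall>Y\<in>T_span br. K X Y = 0"
  shows "X = (\<lambda>x. 0)"
proof
  fix w
  have "B (X w) s = 0" for s
    using K_generator_right[OF X, of w s] orth T_span_generator[of br w s] by simp
  then show "X w = 0" by (rule B_nondegenerate)
qed

lemma K_comm_bracket_generator:
  "Y \<in> T_span br \<Longrightarrow> X \<in> T_span br \<Longrightarrow>
    B (comm_bracket X Y w) s + K (comm_bracket X (br w s)) Y = 0"
proof (induction rule: T_span_induct)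
  case zero
  then show ?case
    using comm_bracket_zero_right[OF linear_T_span] B_zero_left
      K_zero_right[OF T_span_comm_bracket[OF _ T_span_generator]]
    by simp
next
  case (step c u v Y)
  have XT: "comm_bracket X (br w s) \<in> T_span br"
    using step.prems T_span_generator by (rule T_span_comm_bracket)
  have "B (comm_bracket X (\<lambda>x. c *\<^sub>R br u v x + Y x) w) s
      + K (comm_bracket X (br w s)) (\<lambda>x. c *\<^sub>R br u v x + Y x)
    = c * (B (comm_bracket X (br u v) w) s + B (comm_bracket X (br w s) u) v)
      + (B (comm_bracket X Y w) s + K (comm_bracket X (br w s)) Y)"
    unfolding comm_bracket_linear_right[OF linear_T_span[OF step.prems]]
      K_linear_right[OF T_span_generator step.hyps XT] K_generator_right[OF XT]
    by (simp add: B_add_left B_scaleR_left algebra_simps)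
  then show ?case
    using T_span_generator_invariance[OF step.prems] step.IH[OF step.prems] by simp
qed

lemma K_invariant:
  "Z \<in> T_span br \<Longrightarrow> X \<in> T_span br \<Longrightarrow> Y \<in> T_span br \<Longrightarrow>
    K (comm_bracket X Y) Z + K Y (comm_bracket X Z) = 0"
proof (induction rule: T_span_induct)
  case zero
  then show ?case
    using comm_bracket_zero_right[OF linear_T_span] K_zero_right[OF T_span_comm_bracket]
    by (simp add: K_zero_right)
next
  case (step c u v Z)
  have XY: "comm_bracket X Y \<in> T_span br"
    using step.prems by (rule T_span_comm_bracket)
  have XT: "comm_bracket X (br u v) \<in> T_span br"
    using step.prems(1) T_span_generator by (rule T_span_comm_bracket)
  have XZ: "comm_bracket X Z \<in> T_span br"
    using step.prems(1) step.hyps by (rule T_span_comm_bracket)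
  have "K (comm_bracket X Y) (\<lambda>x. c *\<^sub>R br u v x + Z x)
      + K Y (comm_bracket X (\<lambda>x. c *\<^sub>R br u v x + Z x))
    = c * (B (comm_bracket X Y u) v + K (comm_bracket X (br u v)) Y)
      + (K (comm_bracket X Y) Z + K Y (comm_bracket X Z))"
    unfolding comm_bracket_linear_right[OF linear_T_span[OF step.prems(1)]]
      K_linear_right[OF T_span_generator step.hyps XY] K_linear_right[OF XT XZ step.prems(2)]
      K_generator_right[OF XY] K_sym[OF XT step.prems(2)]
    by (simp add: algebra_simps)
  then show ?case
    using K_comm_bracket_generator[OF step.prems(2,1)] step.IH[OF step.prems] by simp
qed

end

theorem mainTheorem17:
  fixes B :: "'v::euclidean_space \<Rightarrow> 'v \<Rightarrow> real"
    and br :: "'v \<Rightarrow> 'v \<Rightarrow> 'v \<Rightarrow> 'v"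
  assumes "metric_3leibniz B br"
  shows "(\<exists>K. bilinear_on (T_span br) K \<and> (\<forall>u v w s. K (br u v) (br w s) = B (br u v w) s))
    \<and> (\<forall>K. bilinear_on (T_span br) K \<and> (\<forall>u v w s. K (br u v) (br w s) = B (br u v w) s) \<longrightarrow>
          (\<forall>X\<in>T_span br. \<forall>Y\<in>T_span br. K X Y = K Y X)
        \<and> (\<forall>X\<in>T_span br. (\<forall>Y\<in>T_span br. K X Y = 0) \<longrightarrow> X = (\<lambda>x. 0))
        \<and> (\<forall>X\<in>T_span br. \<forall>Y\<in>T_span br. \<forall>Z\<in>T_span br.
             K (comm_bracket X Y) Z + K Y (comm_bracket X Z) = 0))"
proof (intro conjI allI impI)
  interpret metric_3leibniz_algebra B br
    using assms by (rule metric_3leibniz_algebra.intro)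
  show "\<exists>K. bilinear_on (T_span br) K \<and> (\<forall>u v w s. K (br u v) (br w s) = B (br u v w) s)"
    using bilinear_on_T_form T_form_generators by blast
next
  fix K
  assume "bilinear_on (T_span br) K \<and> (\<forall>u v w s. K (br u v) (br w s) = B (br u v w) s)"
  then interpret generator_pairing B br K
    using assms by unfold_locales auto
  show "\<forall>X\<in>T_span br. \<forall>Y\<in>T_span br. K X Y = K Y X"
    using K_sym by blast
  show "\<forall>X\<in>T_span br. (\<forall>Y\<in>T_span br. K X Y = 0) \<longrightarrow> X = (\<lambda>x. 0)"
    using K_nondegenerate by blast
  show "\<forall>X\<in>T_span br. \<forall>Y\<in>T_span br. \<forall>Z\<in>T_span br.
      K (comm_bracket X Y) Z + K Y (comm_bracket X Z) = 0"
    using K_invariant by blast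
qed

end
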